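(* Let $B$ be a regular ROBP of length $n$ and width $w$, where $n\ge 2$ is a power of $2$, with random walk matrices $\mathbf{M}_{\ell..r}$ and weights $W(\ell,r,y)$ as defined in the context. Let $W^*=w^2$, let $0<\gamma<1/2$, and let $\varepsilon^{(i)}=\frac{\gamma^{i+1}}{10(i+1)^2\log(n)}$ for integers $i\ge 0$. Let $\delta=\varepsilon^{(0)}/(3W^* )$ and let $G_0:\{0,1\}^{d_0}\to\{0,1\}^n$ be any function such that for every $0\le \ell<r\le n$ and every $y\in\mathbb{R}^w$, $$\Big\|\Big(\mathbb{E}_{s\sim\{0,1\}^{d_0}}\big[\mathbf{M}_{\ell..r}(G_0(s)_{[\le r-\ell]})\big]-\mathbf{M}_{\ell..r}\Big)y\Big\|_\infty\le \delta\, W(\ell,r,y).$$ For $(\ell,r)\in\mathsf{BS}_n$ with $r-\ell\ge 2$ define $\mathbf{M}^{(0)}_{\ell..r}=\mathbb{E}_{s\sim\{0,1\}^{d_0}}[\mathbf{M}_{\ell..r}(G_0(s)_{[\le r-\ell]})]$, and define $\mathbf{M}^{(k)}_{\ell..r}$ for all $k\ge 0$ and $(\ell,r)\in\mathsf{BS}_n$ by the recursion in the context. Then for every integer $k\ge 0$ and every $(\ell,r)\in\mathsf{BS}_n$, $\mathbf{M}^{(k)}_{\ell..r}$ is a $C_t\varepsilon^{(k)}$-weight approximation of $\mathbf{M}_{\ell..r}$, where $t=\log(r-\ell)$ and $C_t=(1+1/\log(n))^t/3$; that is, for every $y\in\mathbb{R}^w$, $$\big\|(\mathbf{M}^{(k)}_{\ell..r}-\mathbf{M}_{\ell..r})y\big\|_\infty\le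 C_t\varepsilon^{(k)}\cdot\frac{W(\ell,r,y)}{W^*}.$$
   Context: All logarithms are base $2$. A read-once branching program (ROBP) of length $n$ and width $w$ is given by transition functions $B_i:[w]\times\{0,1\}\to[w]$ for $i\in[n]$ (plus a start state and accept states, irrelevant here). It is regular if for every $i$, every $v\in[w]$ has exactly two preimages $(u,b)$ under $B_i$. For $b\in\{0,1\}$, $\mathbf{M}_i(b)\in\mathbb{R}^{w\times w}$ has $\mathbf{M}_i(b)[u,v]=1$ if $B_i(u,b)=v$ and $0$ otherwise; $\mathbf{M}_i=\frac12(\mathbf{M}_i(0)+\mathbf{M}_i(1))$. For $0\le\ell<r\le n$, $\mathbf{M}_{\ell..r}=\prod_{i=\ell+1}^r\mathbf{M}_i$ and $\mathbf{M}_{\ell..r}(s)=\prod_{i=1}^{r-\ell}\mathbf{M}_{\ell+i}(s_i)$ for $s\in\{0,1\}^{r-\ell}$; $\mathbf{M}_{r..r}$ is the identity. For a string $x$, $x_{[\le j]}$ is its length-$j$ prefix. Weight: for $y\in\mathbb{R}^w$ and $i\in[n]$, $W(i,y)=\sum_{u\in[w]}\sum_{b\in\{0,1\}}|(\mathbf{M}_iy)[u]-y[B_i(u,b)]|$, and $W(\ell,r,y)=\sum_{i=\ell+1}^r W(i,\mathbf{M}_{i..r}y)$. $\mathsf{BS}_n=\{(\ell,r):\exists i,k\ge 0,\ \ell=i2^k,\ r=\ell+2^k,\ 0\le\ell<r\le n\}$. Recursion: for $(\ell,r)\in\mathsf{BS}_n$ with $r-\ell=1$, $\mathbf{M}^{(k)}_{\ell..r}=\mathbf{M}_r$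 for all $k\ge0$; for $r-\ell\ge2$ and $k\ge1$, with $m=(\ell+r)/2$, $$\mathbf{M}^{(k)}_{\ell..r}=\sum_{i+j=k}\mathbf{M}^{(i)}_{\ell..m}\mathbf{M}^{(j)}_{m..r}-\sum_{i+j=k-1}\mathbf{M}^{(i)}_{\ell..m}\mathbf{M}^{(j)}_{m..r}$$ (sums over integers $i,j\ge0$). For $\varepsilon_0\ge0$, a matrix $\widetilde{\mathbf{M}}$ is an $\varepsilon_0$-weight approximation of $\mathbf{M}_{\ell..r}$ if $\|(\widetilde{\mathbf{M}}-\mathbf{M}_{\ell..r})y\|_\infty\le\varepsilon_0 W(\ell,r,y)/W^*$ for all $y\in\mathbb{R}^w$. *)

theory Defs
  imports Complex_Main
begin

type_synonym mat = "nat \<Rightarrow> nat \<Rightarrow> real"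

text \<open>Width-w matrices are functions on indices; only entries with indices < w matter.
  States are [w] = {0..<w}. The ROBP transitions are B i u b for layers i in {1..n}.\<close>

definition mat_mult :: "nat \<Rightarrow> mat \<Rightarrow> mat \<Rightarrow> mat" where
  "mat_mult w A C = (\<lambda>u v. \<Sum>k<w. A u k * C k v)"

definition mat_vec :: "nat \<Rightarrow> mat \<Rightarrow> (nat \<Rightarrow> real) \<Rightarrow> (nat \<Rightarrow> real)" where
  "mat_vec w A y = (\<lambda>u. \<Sum>v<w. A u v * y v)"

definition idm :: mat where
  "idm = (\<lambda>u v. if u = v then 1 else 0)"

definition inf_norm :: "nat \<Rightarrow> (nat \<Rightarrow> real) \<Rightarrow> real" where
  "inf_norm w x = Max ((\<lambda>u. \<bar>x u\<bar>) ` {..<w})"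

definition regular_robp :: "nat \<Rightarrow> nat \<Rightarrow> (nat \<Rightarrow> nat \<Rightarrow> bool \<Rightarrow> nat) \<Rightarrow> bool" where
  "regular_robp n w B \<longleftrightarrow> (\<forall>i\<in>{1..n}. (\<forall>u<w. \<forall>b. B i u b < w) \<and>
      (\<forall>v<w. card {(u, b). u < w \<and> B i u b = v} = 2))"

definition step_mat :: "(nat \<Rightarrow> nat \<Rightarrow> bool \<Rightarrow> nat) \<Rightarrow> nat \<Rightarrow> bool \<Rightarrow> mat" where
  "step_mat B i b = (\<lambda>u v. if B i u b = v then 1 else 0)"

definition walk_mat :: "(nat \<Rightarrow> nat \<Rightarrow> bool \<Rightarrow> nat) \<Rightarrow> nat \<Rightarrow> mat" where
  "walk_mat B i = (\<lambda>u v. (step_mat B i False u v + step_mat B i True u v) / 2)"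

definition range_mat :: "nat \<Rightarrow> (nat \<Rightarrow> nat \<Rightarrow> bool \<Rightarrow> nat) \<Rightarrow> nat \<Rightarrow> nat \<Rightarrow> mat" where
  "range_mat w B l r = foldl (\<lambda>A i. mat_mult w A (walk_mat B i)) idm [Suc l..<Suc r]"

definition str_mat :: "nat \<Rightarrow> (nat \<Rightarrow> nat \<Rightarrow> bool \<Rightarrow> nat) \<Rightarrow> nat \<Rightarrow> bool list \<Rightarrow> mat" where
  "str_mat w B l s = foldl (\<lambda>A i. mat_mult w A (step_mat B (l + i) (s ! (i - 1)))) idm [1..<Suc (length s)]"

definition weight1 :: "nat \<Rightarrow> (nat \<Rightarrow> nat \<Rightarrow> bool \<Rightarrow> nat) \<Rightarrow> nat \<Rightarrow> (nat \<Rightarrow> real) \<Rightarrow> real" where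
  "weight1 w B i y = (\<Sum>u<w. \<Sum>b\<in>(UNIV::bool set). \<bar>mat_vec w (walk_mat B i) y u - y (B i u b)\<bar>)"

definition weight :: "nat \<Rightarrow> (nat \<Rightarrow> nat \<Rightarrow> bool \<Rightarrow> nat) \<Rightarrow> nat \<Rightarrow> nat \<Rightarrow> (nat \<Rightarrow> real) \<Rightarrow> real" where
  "weight w B l r y = (\<Sum>i\<in>{Suc l..r}. weight1 w B i (mat_vec w (range_mat w B i r) y))"

definition in_BS :: "nat \<Rightarrow> nat \<Rightarrow> nat \<Rightarrow> bool" where
  "in_BS n l r \<longleftrightarrow> (\<exists>i k. l = i * 2 ^ k \<and> r = l + 2 ^ k \<and> r \<le> n)"

definition seed_avg :: "nat \<Rightarrow> (nat \<Rightarrow> nat \<Rightarrow> bool \<Rightarrow> nat) \<Rightarrow> nat \<Rightarrow> (bool list \<Rightarrow> bool list) \<Rightarrow> nat \<Rightarrow> nat \<Rightarrow> mat" where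
  "seed_avg w B d0 G0 l r = (\<lambda>u v. (\<Sum>s\<in>{s. length s = d0}. str_mat w B l (take (r - l) (G0 s)) u v) / 2 ^ d0)"

text \<open>The recursion M^(k)_{l..r}; Mbase l r plays the role of M^(0)_{l..r} for r - l >= 2.\<close>
function Mrec :: "nat \<Rightarrow> (nat \<Rightarrow> nat \<Rightarrow> bool \<Rightarrow> nat) \<Rightarrow> (nat \<Rightarrow> nat \<Rightarrow> mat) \<Rightarrow> nat \<Rightarrow> nat \<Rightarrow> nat \<Rightarrow> mat" where
  "Mrec w B Mbase k l r =
     (if r - l \<le> 1 then walk_mat B r
      else if k = 0 then Mbase l r
      else (\<lambda>u v.
        (\<Sum>i\<in>{0..k}. mat_mult w (Mrec w B Mbase i l ((l + r) div 2)) (Mrec w B Mbase (k - i) ((l + r) div 2) r) u v)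
      - (\<Sum>i\<in>{0..k - 1}. mat_mult w (Mrec w B Mbase i l ((l + r) div 2)) (Mrec w B Mbase (k - 1 - i) ((l + r) div 2) r) u v)))"
  by pat_completeness auto
termination
  by (relation "measure (\<lambda>(w, B, Mb, k, l, r). r - l)") auto

end

(*
  The weight W(l,r,y) is controlled by the spread S(y) = sum_{u,v} |y u - y v|. For a regular
  layer i with successors a u = B i u 0 and b u = B i u 1, the averaged vector M_i y satisfies
  W(i,y) + S(M_i y) <= S(y): peeling off level sets reduces this to 0/1 vectors, where it says
  that the number of states whose two successors carry different values is even. Telescoping
  over the layers gives W(l,r,y) <= S(y) <= W* |y|_inf, and W is additive when [l,r] is cut.

  For the error E(k) = M^(k) - M on a dyadic interval with midpoint m, the recursion gives
    E(k)_{l..r} = E(k)_{l..m} M_{m..r} + M_{l..m} E(k)_{m..r}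
                  + sum_{i+j=k} E(i)_{l..m} E(j)_{m..r} - sum_{i+j=k-1} E(i)_{l..m} E(j)_{m..r}.
  By induction on the level t, the first two terms cost C_{t-1} eps(k) times the weights of the
  two halves; a cross term costs C_{t-1}^2 eps(i) eps(j) W/W*, because the sup norm of the inner
  error bounds the weight it carries on the left half. The two convolutions of eps add up to at
  most eps(k)/log n, so with C_{t-1} <= 1 the cross terms only add the factor 1 + 1/log n.
*)
theory Submission
  imports Defs
begin

declare Mrec.simps[simp del]

lemma mat_vec_mat_mult: "mat_vec w (mat_mult w A C) y = mat_vec w A (mat_vec w C y)"
  unfolding mat_vec_def mat_mult_def
  by (rule ext) (simp add: sum_distrib_left sum_distrib_right mult.assoc, rule sum.swap)

lemma mat_vec_cong: "(\<And>v. v < w \<Longrightarrow> y v = z v) \<Longrightarrow> mat_vec w A y = mat_vec w A z"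
  unfolding mat_vec_def by (auto intro: sum.cong)

lemma mat_vec_idm: "mat_vec w idm y u = (if u < w then y u else 0)"
proof -
  have "idm u v * y v = (if u = v then y v else 0)" for v
    by (simp add: idm_def)
  then show ?thesis
    unfolding mat_vec_def by simp
qed

lemma mat_vec_diff: "mat_vec w (\<lambda>u v. X u v - Y u v) y u = mat_vec w X y u - mat_vec w Y y u"
  unfolding mat_vec_def by (simp add: left_diff_distrib sum_subtractf)

lemma mat_vec_add: "mat_vec w A (\<lambda>v. x v + z v) u = mat_vec w A x u + mat_vec w A z u"
  unfolding mat_vec_def by (simp add: distrib_left sum.distrib)

lemma mat_vec_sum: "mat_vec w (\<lambda>u v. \<Sum>i\<in>I. X i u v) y u = (\<Sum>i\<in>I. mat_vec w (X i) y u)"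
  unfolding mat_vec_def by (simp add: sum_distrib_right sum.swap[of _ I])

lemma range_mat_refl: "range_mat w B l l = idm"
  unfolding range_mat_def by simp

lemma range_mat_Suc:
  "l \<le> r \<Longrightarrow> range_mat w B l (Suc r) = mat_mult w (range_mat w B l r) (walk_mat B (Suc r))"
  unfolding range_mat_def by (simp add: upt_Suc_append)

lemma mat_vec_range_mat_split:
  assumes "l \<le> m" "m \<le> r"
  shows "mat_vec w (range_mat w B l r) y = mat_vec w (range_mat w B l m) (mat_vec w (range_mat w B m r) y)"
  using assms(2)
proof (induction r arbitrary: y rule: dec_induct)
  case base
  show ?case
    by (auto simp: range_mat_refl mat_vec_idm intro!: mat_vec_cong)
next
  case (step q)
  then show ?case
    using assms(1) by (simp add: range_mat_Suc mat_vec_mat_mult)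
qed

lemma mat_vec_range_mat_Suc:
  "mat_vec w (range_mat w B l (Suc l)) y u = (if u < w then mat_vec w (walk_mat B (Suc l)) y u else 0)"
  by (simp add: range_mat_Suc range_mat_refl mat_vec_mat_mult mat_vec_idm)

lemma abs_le_inf_norm: "0 < w \<Longrightarrow> u < w \<Longrightarrow> \<bar>x u\<bar> \<le> inf_norm w x"
  unfolding inf_norm_def by (intro Max_ge) auto

lemma inf_norm_leI: "0 < w \<Longrightarrow> (\<And>u. u < w \<Longrightarrow> \<bar>x u\<bar> \<le> c) \<Longrightarrow> inf_norm w x \<le> c"
  unfolding inf_norm_def by (subst Max_le_iff) auto

lemma inf_norm_nonneg: "0 < w \<Longrightarrow> 0 \<le> inf_norm w x"
  using abs_le_inf_norm[of w 0 x] by linarith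

definition spread :: "nat \<Rightarrow> (nat \<Rightarrow> real) \<Rightarrow> real" where
  "spread w z = (\<Sum>u<w. \<Sum>v<w. \<bar>z u - z v\<bar>)"

definition pair_gap :: "nat \<Rightarrow> (nat \<Rightarrow> nat) \<Rightarrow> (nat \<Rightarrow> nat) \<Rightarrow> (nat \<Rightarrow> real) \<Rightarrow> real" where
  "pair_gap w a b z = (\<Sum>u<w. \<bar>z (a u) - z (b u)\<bar>)"

lemma spread_cong: "(\<And>u. u < w \<Longrightarrow> x u = y u) \<Longrightarrow> spread w x = spread w y"
  unfolding spread_def by (intro sum.cong) auto

lemma spread_nonneg: "0 \<le> spread w x"
  unfolding spread_def by (intro sum_nonneg) auto

lemma spread_le_inf_norm:
  assumes "0 < w"
  shows "spread w y \<le> real (w^2) * inf_norm w y"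
proof -
  define N where "N = inf_norm w y"
  have bound: "\<bar>y u\<bar> \<le> N" if "u < w" for u
    unfolding N_def using abs_le_inf_norm[OF assms that] .
  have N_nonneg: "0 \<le> N"
    unfolding N_def using inf_norm_nonneg[OF assms] .
  \<comment> \<open>Termwise \<open>N * \<bar>y u - y v\<bar> \<le> N\<^sup>2 - y u * y v\<close>; the cross terms then sum to \<open>-(\<Sum>u<w. y u)\<^sup>2 \<le> 0\<close>.\<close>
  have termwise: "N * \<bar>y u - y v\<bar> \<le> N * N - y u * y v" if "u < w" "v < w" for u v
  proof (cases "y v \<le> y u")
    case True
    have "0 \<le> (N - y u) * (N + y v)"
      using bound[OF that(1)] bound[OF that(2)] by (intro mult_nonneg_nonneg) auto
    with True show ?thesis by (simp add: algebra_simps)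
  next
    case False
    have "0 \<le> (N - y v) * (N + y u)"
      using bound[OF that(1)] bound[OF that(2)] by (intro mult_nonneg_nonneg) auto
    with False show ?thesis by (simp add: algebra_simps)
  qed
  have "N * spread w y = (\<Sum>u<w. \<Sum>v<w. N * \<bar>y u - y v\<bar>)"
    unfolding spread_def by (simp add: sum_distrib_left)
  also have "\<dots> \<le> (\<Sum>u<w. \<Sum>v<w. N * N - y u * y v)"
    using termwise by (intro sum_mono) auto
  also have "\<dots> = real w * real w * N * N - (\<Sum>u<w. y u) * (\<Sum>v<w. y v)"
    by (simp add: sum_subtractf sum_product)
  also have "\<dots> \<le> N * (real (w^2) * N)"
    by (simp add: power2_eq_square algebra_simps)
  finally have scaled: "N * spread w y \<le> N * (real (w^2) * N)" .
  show ?thesis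
  proof (cases "N = 0")
    case True
    then have "spread w y = 0"
      using bound unfolding spread_def by fastforce
    with True show ?thesis
      by (simp add: N_def)
  next
    case False
    with N_nonneg scaled show ?thesis
      by (simp add: N_def)
  qed
qed

lemma sum_three_valued:
  fixes c :: "'a \<Rightarrow> real"
  assumes "finite A" and "\<And>u. u \<in> A \<Longrightarrow> c u \<in> {0, 1, 2}"
  shows "(\<Sum>u\<in>A. G (c u)) = real (card {u\<in>A. c u = 0}) * G 0
     + real (card {u\<in>A. c u = 1}) * G 1 + real (card {u\<in>A. c u = 2}) * G 2"
proof -
  have "(\<Sum>u\<in>A. G (c u)) = (\<Sum>u\<in>A. of_bool (c u = 0) * G 0
     + of_bool (c u = 1) * G 1 + of_bool (c u = 2) * G 2)"
    using assms(2) by (intro sum.cong) auto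
  also have "\<dots> = (\<Sum>u\<in>A. of_bool (c u = 0)) * G 0
     + (\<Sum>u\<in>A. of_bool (c u = 1)) * G 1 + (\<Sum>u\<in>A. of_bool (c u = 2)) * G 2"
    by (simp add: sum.distrib sum_distrib_right)
  also have "\<dots> = real (card {u\<in>A. c u = 0}) * G 0
     + real (card {u\<in>A. c u = 1}) * G 1 + real (card {u\<in>A. c u = 2}) * G 2"
    using assms(1) by (simp add: Int_def)
  finally show ?thesis .
qed

lemma sum_zero_one_eq_card:
  fixes f :: "nat \<Rightarrow> real"
  assumes "\<And>v. v < w \<Longrightarrow> f v \<in> {0, 1}"
  shows "(\<Sum>v<w. f v) = real (card {v\<in>{..<w}. f v = 1})"
proof -
  have "(\<Sum>v<w. f v) = (\<Sum>v<w. of_bool (f v = 1))"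
    using assms by (intro sum.cong refl) fastforce
  also have "\<dots> = real (card ({..<w} \<inter> {v. f v = 1}))"
    by (rule sum_of_bool_eq) simp_all
  also have "{..<w} \<inter> {v. f v = 1} = {v\<in>{..<w}. f v = 1}"
    by auto
  finally show ?thesis .
qed

lemma spread_zero_one:
  assumes "\<And>v. v < w \<Longrightarrow> f v \<in> {0, 1}"
  shows "spread w f = 2 * (\<Sum>v<w. f v) * (real w - (\<Sum>v<w. f v))"
proof -
  have "\<bar>f u - f v\<bar> = f u + f v - 2 * f u * f v" if "u < w" "v < w" for u v
    using assms[OF that(1)] assms[OF that(2)] by auto
  then have "spread w f = (\<Sum>u<w. \<Sum>v<w. f u + f v - 2 * f u * f v)"
    unfolding spread_def by (intro sum.cong refl) auto
  also have "\<dots> = 2 * real w * (\<Sum>v<w. f v) - 2 * (\<Sum>u<w. \<Sum>v<w. f u * f v)"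
    by (simp add: sum.distrib sum_subtractf sum_distrib_left mult.assoc)
  also have "\<dots> = 2 * real w * (\<Sum>v<w. f v) - 2 * (\<Sum>v<w. f v) * (\<Sum>v<w. f v)"
    by (simp add: sum_product)
  finally show ?thesis
    by (simp add: algebra_simps)
qed

lemma spread_three_valued:
  fixes c :: "nat \<Rightarrow> real"
  assumes "\<And>u. u < w \<Longrightarrow> c u \<in> {0, 1, 2}"
  shows "spread w c = 2 * (real (card {u\<in>{..<w}. c u = 0}) * real (card {u\<in>{..<w}. c u = 1})
    + 2 * real (card {u\<in>{..<w}. c u = 0}) * real (card {u\<in>{..<w}. c u = 2})
    + real (card {u\<in>{..<w}. c u = 1}) * real (card {u\<in>{..<w}. c u = 2}))"
proof -
  define n where "n j = real (card {u\<in>{..<w}. c u = j})" for j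
  note count = sum_three_valued[of "{..<w}" c, OF finite_lessThan, folded n_def]
  have "spread w c = (\<Sum>u<w. n 0 * \<bar>c u\<bar> + n 1 * \<bar>c u - 1\<bar> + n 2 * \<bar>c u - 2\<bar>)"
    unfolding spread_def
  proof (intro sum.cong refl)
    fix u
    show "(\<Sum>v<w. \<bar>c u - c v\<bar>) = n 0 * \<bar>c u\<bar> + n 1 * \<bar>c u - 1\<bar> + n 2 * \<bar>c u - 2\<bar>"
      using count[of "\<lambda>x. \<bar>c u - x\<bar>"] assms by simp
  qed
  also have "\<dots> = 2 * (n 0 * n 1 + 2 * n 0 * n 2 + n 1 * n 2)"
    using count[of "\<lambda>x. n 0 * \<bar>x\<bar> + n 1 * \<bar>x - 1\<bar> + n 2 * \<bar>x - 2\<bar>"] assms by (simp add: algebra_simps)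
  finally show ?thesis
    unfolding n_def .
qed

lemma spread_add_le: "spread w (\<lambda>u. x u + y u) \<le> spread w x + spread w y"
  unfolding spread_def sum.distrib[symmetric]
proof (intro sum_mono)
  fix u v
  show "\<bar>x u + y u - (x v + y v)\<bar> \<le> \<bar>x u - x v\<bar> + \<bar>y u - y v\<bar>"
    using abs_triangle_ineq[of "x u - x v" "y u - y v"] by (simp add: algebra_simps)
qed

lemma spread_scale: "0 \<le> h \<Longrightarrow> spread w (\<lambda>u. h * x u) = h * spread w x"
  unfolding spread_def by (simp add: sum_distrib_left abs_mult flip: right_diff_distrib)

lemma split_top_level:
  fixes z :: "nat \<Rightarrow> real"
  assumes "2 \<le> card (z ` {..<w})"
  obtains z' :: "nat \<Rightarrow> real" and f :: "nat \<Rightarrow> real" and h :: real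
  where "0 < h" "card (z' ` {..<w}) < card (z ` {..<w})" "\<And>v. f v \<in> {0, 1}"
    "\<And>x. x < w \<Longrightarrow> z x = z' x + h * f x"
    "\<And>x y. x < w \<Longrightarrow> y < w \<Longrightarrow> \<bar>z x - z y\<bar> = \<bar>z' x - z' y\<bar> + h * \<bar>f x - f y\<bar>"
proof -
  define V where "V = z ` {..<w}"
  define \<mu> where "\<mu> = Max V"
  define \<mu>' where "\<mu>' = Max (V - {\<mu>})"
  have "finite V" "V \<noteq> {}"
    using assms by (auto simp: V_def)
  then have \<mu>_in: "\<mu> \<in> V" and le_\<mu>: "\<And>x. x \<in> V \<Longrightarrow> x \<le> \<mu>"
    by (simp_all add: \<mu>_def)
  have "0 < card (V - {\<mu>})"
    using \<mu>_in \<open>finite V\<close> assms by (simp add: V_def)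
  then have "V - {\<mu>} \<noteq> {}"
    by (metis card_gt_0_iff)
  moreover have "finite (V - {\<mu>})"
    using \<open>finite V\<close> by simp
  ultimately have \<mu>'_in: "\<mu>' \<in> V - {\<mu>}" and le_\<mu>': "\<And>x. x \<in> V - {\<mu>} \<Longrightarrow> x \<le> \<mu>'"
    unfolding \<mu>'_def by (simp_all del: Diff_iff)
  have "\<mu>' < \<mu>"
    using \<mu>'_in le_\<mu> by force
  have top: "z v = \<mu>" if "v < w" "\<mu>' < z v" for v
    using le_\<mu>'[of "z v"] that by (force simp: V_def)
  define z' where "z' v = min (z v) \<mu>'" for v
  define f :: "nat \<Rightarrow> real" where "f v = of_bool (\<mu>' < z v)" for v
  show thesis
  proof
    show "0 < \<mu> - \<mu>'"
      using \<open>\<mu>' < \<mu>\<close> by simp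
    have "z' ` {..<w} \<subseteq> V - {\<mu>}"
      using \<mu>'_in \<open>\<mu>' < \<mu>\<close> by (auto simp: z'_def V_def min_def)
    then have "card (z' ` {..<w}) \<le> card (V - {\<mu>})"
      using \<open>finite V\<close> by (intro card_mono) auto
    also have "\<dots> < card V"
      using \<mu>_in \<open>finite V\<close> by (intro psubset_card_mono) auto
    finally show "card (z' ` {..<w}) < card (z ` {..<w})"
      by (simp add: V_def)
    show "f v \<in> {0, 1}" for v
      by (simp add: f_def)
    show "z x = z' x + (\<mu> - \<mu>') * f x" if "x < w" for x
      using top[OF that] by (auto simp: z'_def f_def min_def)
    show "\<bar>z x - z y\<bar> = \<bar>z' x - z' y\<bar> + (\<mu> - \<mu>') * \<bar>f x - f y\<bar>" if "x < w" "y < w" for x y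
      using top[OF that(1)] top[OF that(2)] \<open>\<mu>' < \<mu>\<close> by (auto simp: z'_def f_def min_def)
  qed
qed

context
  fixes w :: nat and a b :: "nat \<Rightarrow> nat"
  assumes maps_into: "\<And>u. u < w \<Longrightarrow> a u < w \<and> b u < w"
    and two_preimages: "\<And>g. (\<Sum>u<w. g (a u) + g (b u)) = 2 * (\<Sum>v<w. g v :: real)"
begin

lemma pair_gap_spread_avg_le_zero_one:
  assumes f01: "\<And>v. v < w \<Longrightarrow> f v \<in> {0, 1}"
  shows "pair_gap w a b f + spread w (\<lambda>u. (f (a u) + f (b u)) / 2) \<le> spread w f"
proof -
  define c where "c u = f (a u) + f (b u)" for u
  have c_vals: "c u \<in> {0, 1, 2}" if "u < w" for u
    using f01[of "a u"] f01[of "b u"] maps_into[OF that] by (auto simp: c_def)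
  define n where "n j = card {u\<in>{..<w}. c u = j}" for j
  note count = sum_three_valued[of "{..<w}" c, OF finite_lessThan c_vals, folded n_def]
  have gap: "pair_gap w a b f = real (n 1)"
  proof -
    have "\<bar>f (a u) - f (b u)\<bar> = c u * (2 - c u)" if "u < w" for u
      using f01[of "a u"] f01[of "b u"] maps_into[OF that] by (auto simp: c_def)
    then have "pair_gap w a b f = (\<Sum>u<w. c u * (2 - c u))"
      unfolding pair_gap_def by (intro sum.cong refl) auto
    then show ?thesis
      using count[of "\<lambda>x. x * (2 - x)"] by simp
  qed
  have "spread w (\<lambda>u. (f (a u) + f (b u)) / 2) = spread w c / 2"
    unfolding spread_def c_def by (simp add: diff_divide_distrib[symmetric] sum_divide_distrib)
  also have "\<dots> = real (n 0) * real (n 1) + 2 * real (n 0) * real (n 2) + real (n 1) * real (n 2)"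
    using spread_three_valued[of w c] c_vals unfolding n_def by simp
  finally have avg: "spread w (\<lambda>u. (f (a u) + f (b u)) / 2)
      = real (n 0) * real (n 1) + 2 * real (n 0) * real (n 2) + real (n 1) * real (n 2)" .
  have width: "real w = real (n 0) + real (n 1) + real (n 2)"
    using count[of "\<lambda>_. 1"] by simp
  define s where "s = card {v\<in>{..<w}. f v = 1}"
  have sum_f: "(\<Sum>v<w. f v) = real s"
    unfolding s_def using f01 by (rule sum_zero_one_eq_card)
  \<comment> \<open>Double counting through the two preimages: \<open>n 1 + 2 n 2 = 2 s\<close>, so \<open>n 1\<close> is even.\<close>
  have s_eq: "real s = (real (n 1) + 2 * real (n 2)) / 2"
    using two_preimages[of f] count[of "\<lambda>x. x"] by (simp add: c_def sum_f)
  then have "real (n 1 + 2 * n 2) = real (2 * s)"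
    by simp
  then have "n 1 + 2 * n 2 = 2 * s"
    by (simp only: of_nat_eq_iff)
  then have "n 1 = 0 \<or> 2 \<le> n 1"
    by presburger
  then have gap_le: "real (n 1) \<le> real (n 1) * real (n 1) / 2"
    by (auto simp: field_simps)
  have "spread w f = 2 * real s * (real w - real s)"
    using spread_zero_one[OF f01] by (simp add: sum_f)
  also have "\<dots> = real (n 0) * real (n 1) + real (n 1) * real (n 1) / 2
      + 2 * real (n 0) * real (n 2) + real (n 1) * real (n 2)"
    unfolding width s_eq by (simp add: field_simps)
  finally show ?thesis
    using gap avg gap_le by linarith
qed

lemma pair_gap_spread_avg_le_const:
  assumes "card (z ` {..<w}) \<le> 1"
  shows "pair_gap w a b z + spread w (\<lambda>u. (z (a u) + z (b u)) / 2) \<le> spread w z"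
proof -
  have "\<forall>x\<in>z ` {..<w}. \<forall>y\<in>z ` {..<w}. x = y"
    using assms by (metis One_nat_def card_le_Suc0_iff_eq finite_imageI finite_lessThan)
  then have "z x = z 0" if "x < w" for x
    using that by (metis imageI lessThan_iff gr_implies_not0 neq0_conv)
  then obtain c where c: "\<And>x. x < w \<Longrightarrow> z x = c"
    by blast
  have "pair_gap w a b z = 0"
    unfolding pair_gap_def using maps_into by (simp add: c)
  moreover have "spread w (\<lambda>u. (z (a u) + z (b u)) / 2) = 0"
    unfolding spread_def using maps_into by (simp add: c)
  ultimately show ?thesis
    using spread_nonneg[of w z] by simp
qed

\<comment> \<open>Induction on the number of values of \<open>z\<close>: after peeling off the top level, spread and
  pair gap split additively and the averaged spread subadditively, so 0/1 vectors suffice.\<close>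
lemma pair_gap_spread_avg_le:
  "pair_gap w a b z + spread w (\<lambda>u. (z (a u) + z (b u)) / 2) \<le> spread w z"
proof (induction "card (z ` {..<w})" arbitrary: z rule: less_induct)
  case less
  show ?case
  proof (cases "card (z ` {..<w}) \<le> 1")
    case True
    then show ?thesis
      by (rule pair_gap_spread_avg_le_const)
  next
    case False
    then have "2 \<le> card (z ` {..<w})"
      by simp
    then obtain z' f h where "0 < h" and fewer: "card (z' ` {..<w}) < card (z ` {..<w})"
      and f01: "\<And>v. f v \<in> {0, 1}" and z_eq: "\<And>x. x < w \<Longrightarrow> z x = z' x + h * f x"
      and abs_eq: "\<And>x y. x < w \<Longrightarrow> y < w \<Longrightarrow> \<bar>z x - z y\<bar> = \<bar>z' x - z' y\<bar> + h * \<bar>f x - f y\<bar>"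
      by (rule split_top_level) blast
    have "spread w z = spread w z' + h * spread w f"
      unfolding spread_def using abs_eq by (simp add: sum.distrib sum_distrib_left)
    moreover have "pair_gap w a b z = pair_gap w a b z' + h * pair_gap w a b f"
      unfolding pair_gap_def using abs_eq maps_into by (simp add: sum.distrib sum_distrib_left)
    moreover have "spread w (\<lambda>u. (z (a u) + z (b u)) / 2)
        \<le> spread w (\<lambda>u. (z' (a u) + z' (b u)) / 2) + h * spread w (\<lambda>u. (f (a u) + f (b u)) / 2)"
    proof -
      have "spread w (\<lambda>u. (z (a u) + z (b u)) / 2)
          = spread w (\<lambda>u. (z' (a u) + z' (b u)) / 2 + h * ((f (a u) + f (b u)) / 2))"
        using z_eq maps_into by (intro spread_cong) (simp add: field_simps)
      also have "\<dots> \<le> spread w (\<lambda>u. (z' (a u) + z' (b u)) / 2) + spread w (\<lambda>u. h * ((f (a u) + f (b u)) / 2))"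
        by (rule spread_add_le)
      finally show ?thesis
        unfolding spread_scale[OF less_imp_le[OF \<open>0 < h\<close>]] .
    qed
    moreover have "pair_gap w a b z' + spread w (\<lambda>u. (z' (a u) + z' (b u)) / 2) \<le> spread w z'"
      using fewer by (rule less.hyps)
    moreover have "h * (pair_gap w a b f + spread w (\<lambda>u. (f (a u) + f (b u)) / 2)) \<le> h * spread w f"
      using f01 \<open>0 < h\<close> by (intro mult_left_mono pair_gap_spread_avg_le_zero_one) auto
    ultimately show ?thesis
      by (simp add: algebra_simps)
  qed
qed

end

context
  fixes n w :: nat and B :: "nat \<Rightarrow> nat \<Rightarrow> bool \<Rightarrow> nat"
  assumes reg: "regular_robp n w B"
begin

lemma robp_next_lt: "i \<in> {1..n} \<Longrightarrow> u < w \<Longrightarrow> B i u b < w"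
  using reg unfolding regular_robp_def by blast

lemma sum_over_layer:
  assumes i: "i \<in> {1..n}"
  shows "(\<Sum>u<w. g (B i u False) + g (B i u True)) = 2 * (\<Sum>v<w. g v :: real)"
proof -
  define S where "S = {..<w} \<times> (UNIV :: bool set)"
  define next_state where "next_state p = B i (fst p) (snd p)" for p
  have "(\<Sum>u<w. g (B i u False) + g (B i u True)) = (\<Sum>u<w. \<Sum>b\<in>UNIV. g (B i u b))"
    by (simp add: UNIV_bool add.commute)
  also have "\<dots> = (\<Sum>p\<in>S. g (next_state p))"
    unfolding S_def next_state_def by (simp add: sum.cartesian_product case_prod_beta)
  also have "\<dots> = (\<Sum>v<w. \<Sum>p\<in>{p\<in>S. next_state p = v}. g (next_state p))"
    by (rule sum.group[symmetric]) (auto simp: S_def next_state_def robp_next_lt[OF i])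
  also have "\<dots> = (\<Sum>v<w. 2 * g v)"
  proof (intro sum.cong refl)
    fix v assume "v \<in> {..<w}"
    have "{p\<in>S. next_state p = v} = {(u, b). u < w \<and> B i u b = v}"
      unfolding S_def next_state_def by auto
    then have "card {p\<in>S. next_state p = v} = 2"
      using reg i \<open>v \<in> {..<w}\<close> unfolding regular_robp_def by auto
    then show "(\<Sum>p\<in>{p\<in>S. next_state p = v}. g (next_state p)) = 2 * g v"
      by simp
  qed
  finally show ?thesis
    by (simp add: sum_distrib_left)
qed

lemma mat_vec_walk_mat:
  assumes "i \<in> {1..n}" "u < w"
  shows "mat_vec w (walk_mat B i) z u = (z (B i u False) + z (B i u True)) / 2"
proof -
  have row: "(\<lambda>v. walk_mat B i u v * z v)
      = (\<lambda>v. (if B i u False = v then z v else 0) / 2 + (if B i u True = v then z v else 0) / 2)"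
    by (auto simp: walk_mat_def step_mat_def)
  have "mat_vec w (walk_mat B i) z u
      = (\<Sum>v<w. if B i u False = v then z v else 0) / 2 + (\<Sum>v<w. if B i u True = v then z v else 0) / 2"
    unfolding mat_vec_def row by (simp add: sum.distrib sum_divide_distrib[symmetric])
  then show ?thesis
    using robp_next_lt[OF assms] by (simp add: add_divide_distrib)
qed

lemma weight1_eq_pair_gap:
  assumes i: "i \<in> {1..n}"
  shows "weight1 w B i z = pair_gap w (\<lambda>u. B i u False) (\<lambda>u. B i u True) z"
  unfolding weight1_def pair_gap_def
  by (intro sum.cong refl) (simp add: mat_vec_walk_mat[OF i] UNIV_bool abs_if field_simps)

lemma weight1_le_spread_decrease:
  assumes i: "i \<in> {1..n}"
  shows "weight1 w B i z \<le> spread w z - spread w (mat_vec w (walk_mat B i) z)"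
proof -
  have "spread w (mat_vec w (walk_mat B i) z) = spread w (\<lambda>u. (z (B i u False) + z (B i u True)) / 2)"
    by (intro spread_cong) (simp add: mat_vec_walk_mat[OF i])
  moreover have "pair_gap w (\<lambda>u. B i u False) (\<lambda>u. B i u True) z
      + spread w (\<lambda>u. (z (B i u False) + z (B i u True)) / 2) \<le> spread w z"
    by (rule pair_gap_spread_avg_le) (auto simp: robp_next_lt[OF i] sum_over_layer[OF i])
  ultimately show ?thesis
    by (simp add: weight1_eq_pair_gap[OF i])
qed

lemma weight_nonneg: "0 \<le> weight w B l r y"
  unfolding weight_def weight1_def by (intro sum_nonneg) auto

lemma weight_le_spread:
  assumes "l \<le> r" "r \<le> n"
  shows "weight w B l r y \<le> spread w y"
proof -
  define z where "z i = mat_vec w (range_mat w B i r) y" for i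
  have step: "weight1 w B i (z i) \<le> spread w (z i) - spread w (z (i - 1))" if i: "i \<in> {Suc l..r}" for i
  proof -
    have "z (i - 1) = mat_vec w (range_mat w B (i - 1) i) (z i)"
      unfolding z_def using i by (intro mat_vec_range_mat_split) auto
    then have "spread w (z (i - 1)) = spread w (mat_vec w (walk_mat B i) (z i))"
      using i mat_vec_range_mat_Suc[of w B "i - 1" "z i"] by (intro spread_cong) auto
    then show ?thesis
      using weight1_le_spread_decrease[of i "z i"] i assms by simp
  qed
  have "weight w B l r y = (\<Sum>i\<in>{Suc l..r}. weight1 w B i (z i))"
    unfolding weight_def z_def ..
  also have "\<dots> \<le> (\<Sum>i\<in>{Suc l..r}. spread w (z i) - spread w (z (i - 1)))"
    using step by (intro sum_mono)
  also have "\<dots> = spread w (z r) - spread w (z l)"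
    using assms(1) by (rule sum_telescope'')
  also have "spread w (z r) = spread w y"
    unfolding z_def by (intro spread_cong) (simp add: range_mat_refl mat_vec_idm)
  finally show ?thesis
    using spread_nonneg[of w "z l"] by simp
qed

lemma weight_le_inf_norm:
  "0 < w \<Longrightarrow> l \<le> r \<Longrightarrow> r \<le> n \<Longrightarrow> weight w B l r y \<le> real (w^2) * inf_norm w y"
  using weight_le_spread[of l r y] spread_le_inf_norm[of w y] by linarith

lemma weight_split:
  assumes "l \<le> m" "m \<le> r"
  shows "weight w B l r y = weight w B l m (mat_vec w (range_mat w B m r) y) + weight w B m r y"
proof -
  have split: "{Suc l..r} = {Suc l..m} \<union> {Suc m..r}"
    using assms by auto
  have "weight w B l r y = (\<Sum>i\<in>{Suc l..m}. weight1 w B i (mat_vec w (range_mat w B i r) y))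
      + weight w B m r y"
    unfolding weight_def split by (rule sum.union_disjoint) auto
  also have "(\<Sum>i\<in>{Suc l..m}. weight1 w B i (mat_vec w (range_mat w B i r) y))
      = weight w B l m (mat_vec w (range_mat w B m r) y)"
    unfolding weight_def
  proof (intro sum.cong refl)
    fix i assume "i \<in> {Suc l..m}"
    then have "mat_vec w (range_mat w B i r) y
        = mat_vec w (range_mat w B i m) (mat_vec w (range_mat w B m r) y)"
      using assms by (intro mat_vec_range_mat_split) auto
    then show "weight1 w B i (mat_vec w (range_mat w B i r) y)
        = weight1 w B i (mat_vec w (range_mat w B i m) (mat_vec w (range_mat w B m r) y))"
      by simp
  qed
  finally show ?thesis .
qed

lemma abs_mat_vec_range_mat_le:
  assumes "l \<le> m" "m \<le> n" "\<And>v. v < w \<Longrightarrow> \<bar>x v\<bar> \<le> c" "u < w"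
  shows "\<bar>mat_vec w (range_mat w B l m) x u\<bar> \<le> c"
  using assms
proof (induction m arbitrary: x rule: dec_induct)
  case base
  then show ?case
    by (simp add: range_mat_refl mat_vec_idm)
next
  case (step q)
  have "Suc q \<in> {1..n}"
    using step by auto
  have "\<bar>mat_vec w (walk_mat B (Suc q)) x v\<bar> \<le> c" if "v < w" for v
  proof -
    have "\<bar>x (B (Suc q) v b)\<bar> \<le> c" for b
      using step.prems(2) robp_next_lt[OF \<open>Suc q \<in> {1..n}\<close> that] .
    from this[of False] this[of True] show ?thesis
      unfolding mat_vec_walk_mat[OF \<open>Suc q \<in> {1..n}\<close> that] by (auto simp: abs_le_iff)
  qed
  then have "\<bar>mat_vec w (range_mat w B l q) (mat_vec w (walk_mat B (Suc q)) x) u\<bar> \<le> c"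
    using step by (intro step.IH) auto
  then show ?case
    using step.hyps by (simp add: range_mat_Suc mat_vec_mat_mult)
qed

end

lemma sum_inverse_squares_le_telescoping:
  "1 \<le> M \<Longrightarrow> (\<Sum>a=1..M. 1 / (real a)^2) \<le> 5/3 - 2 / (2 * real M + 1)"
proof (induction M rule: dec_induct)
  case base
  then show ?case
    by simp
next
  case (step q)
  have "1 / (real (Suc q))^2 = 4 / (4 * (real (Suc q))^2)"
    by simp
  also have "\<dots> \<le> 4 / ((2 * real q + 1) * (2 * real q + 3))"
  proof (intro divide_left_mono mult_pos_pos)
    show "(2 * real q + 1) * (2 * real q + 3) \<le> 4 * (real (Suc q))^2"
      by (simp add: power2_eq_square algebra_simps)
  qed auto
  also have "\<dots> = 2 / (2 * real q + 1) - 2 / (2 * real (Suc q) + 1)"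
    by (simp add: field_simps)
  finally show ?case
    using step.IH by simp
qed

lemma sum_inverse_squares_le: "(\<Sum>a=1..M. 1 / (real a)^2) \<le> 5/3"
proof (cases "1 \<le> M")
  case True
  have "0 \<le> 2 / (2 * real M + 1)"
    by simp
  then show ?thesis
    using sum_inverse_squares_le_telescoping[OF True] by linarith
qed simp

lemma inverse_square_product_le:
  fixes x y :: real
  assumes "0 < x" "0 < y"
  shows "1 / (x^2 * y^2) \<le> 2 * (1 / x^2 + 1 / y^2) / (x + y)^2"
proof -
  have "(x + y)^2 \<le> 2 * (x^2 + y^2)"
    using sum_squares_ge_zero[of "x - y" 0] by (simp add: power2_eq_square algebra_simps)
  then show ?thesis
    using assms by (simp add: field_simps)
qed

lemma inverse_square_convolution_le:
  "(\<Sum>i\<in>{0..N}. 1 / ((real i + 1)^2 * (real (N - i) + 1)^2)) \<le> (20/3) / (real N + 2)^2"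
proof -
  have "(\<Sum>i\<in>{0..N}. 1 / ((real i + 1)^2 * (real (N - i) + 1)^2))
     \<le> (\<Sum>i\<in>{0..N}. 2 * (1 / (real i + 1)^2 + 1 / (real (N - i) + 1)^2) / (real N + 2)^2)"
  proof (intro sum_mono)
    fix i assume "i \<in> {0..N}"
    then have sum_eq: "(real i + 1) + (real (N - i) + 1) = real N + 2"
      by auto
    show "1 / ((real i + 1)^2 * (real (N - i) + 1)^2)
        \<le> 2 * (1 / (real i + 1)^2 + 1 / (real (N - i) + 1)^2) / (real N + 2)^2"
      using inverse_square_product_le[of "real i + 1" "real (N - i) + 1", unfolded sum_eq] by simp
  qed
  also have "\<dots> = 2 * ((\<Sum>i\<in>{0..N}. 1 / (real i + 1)^2) + (\<Sum>i\<in>{0..N}. 1 / (real (N - i) + 1)^2))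
      / (real N + 2)^2"
    by (simp only: sum_divide_distrib[symmetric] sum_distrib_left[symmetric] sum.distrib)
  also have "(\<Sum>i\<in>{0..N}. 1 / (real (N - i) + 1)^2) = (\<Sum>i\<in>{0..N}. 1 / (real i + 1)^2)"
    by (subst sum.atLeastAtMost_rev) simp
  also have "(\<Sum>i\<in>{0..N}. 1 / (real i + 1)^2) = (\<Sum>a=1..Suc N. 1 / (real a)^2)"
  proof -
    have "(\<Sum>a=1..Suc N. 1 / (real a)^2) = (\<Sum>i\<in>{0..N}. 1 / (real (Suc i))^2)"
      by (subst sum.shift_bounds_cl_Suc_ivl[symmetric]) simp
    then show ?thesis
      by (simp add: add.commute)
  qed
  also have "2 * ((\<Sum>a=1..Suc N. 1 / (real a)^2) + (\<Sum>a=1..Suc N. 1 / (real a)^2)) / (real N + 2)^2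
      \<le> 2 * (5/3 + 5/3) / (real N + 2)^2"
    using sum_inverse_squares_le[of "Suc N"] by (intro divide_right_mono) auto
  finally show ?thesis
    by simp
qed

lemma eps_convolution_eq:
  fixes \<gamma> L :: real and eps :: "nat \<Rightarrow> real"
  assumes "0 < L" and eps_def: "\<And>i. eps i = \<gamma> ^ (i + 1) / (10 * real ((i + 1) ^ 2) * L)"
  shows "(\<Sum>i\<in>{0..K}. eps i * eps (K - i))
    = \<gamma> ^ (K + 2) / (100 * L^2) * (\<Sum>i\<in>{0..K}. 1 / ((real i + 1)^2 * (real (K - i) + 1)^2))"
  unfolding sum_distrib_left
proof (intro sum.cong refl)
  fix i assume "i \<in> {0..K}"
  then have "\<gamma> ^ (i + 1) * \<gamma> ^ (K - i + 1) = \<gamma> ^ (K + 2)"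
    by (simp add: power_add[symmetric])
  moreover have "eps i * eps (K - i) = (\<gamma> ^ (i + 1) * \<gamma> ^ (K - i + 1))
      / (100 * L^2 * ((real i + 1)^2 * (real (K - i) + 1)^2))"
    unfolding eps_def by (simp add: power2_eq_square field_simps)
  ultimately show "eps i * eps (K - i)
      = \<gamma> ^ (K + 2) / (100 * L^2) * (1 / ((real i + 1)^2 * (real (K - i) + 1)^2))"
    by simp
qed

lemma eps_convolution_le:
  fixes \<gamma> L :: real and eps :: "nat \<Rightarrow> real"
  assumes "0 < \<gamma>" "\<gamma> < 1/2" "0 < L"
    and eps_def: "\<And>i. eps i = \<gamma> ^ (i + 1) / (10 * real ((i + 1) ^ 2) * L)"
  shows "(\<Sum>i\<in>{0..Suc k}. eps i * eps (Suc k - i)) + (\<Sum>i\<in>{0..k}. eps i * eps (k - i))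
    \<le> eps (Suc k) / L"
proof -
  define c where "c = \<gamma> ^ (k + 2) / (100 * L^2)"
  have "0 \<le> c"
    unfolding c_def using assms by simp
  have "(\<Sum>i\<in>{0..Suc k}. eps i * eps (Suc k - i))
      = c * \<gamma> * (\<Sum>i\<in>{0..Suc k}. 1 / ((real i + 1)^2 * (real (Suc k - i) + 1)^2))"
    unfolding eps_convolution_eq[OF \<open>0 < L\<close> eps_def] c_def by (simp add: field_simps)
  also have "\<dots> \<le> c * \<gamma> * ((20/3) / (real k + 3)^2)"
    using inverse_square_convolution_le[of "Suc k"] \<open>0 \<le> c\<close> assms(1)
    by (intro mult_left_mono) (auto simp: add.commute)
  also have "\<dots> \<le> c * (1/2) * ((20/3) / (real k + 2)^2)"
    using \<open>0 \<le> c\<close> assms(1,2)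
    by (intro mult_mono divide_left_mono power_mono mult_left_mono mult_pos_pos) auto
  finally have "(\<Sum>i\<in>{0..Suc k}. eps i * eps (Suc k - i)) \<le> c * (1/2) * ((20/3) / (real k + 2)^2)" .
  moreover have "(\<Sum>i\<in>{0..k}. eps i * eps (k - i)) \<le> c * ((20/3) / (real k + 2)^2)"
    unfolding eps_convolution_eq[OF \<open>0 < L\<close> eps_def] c_def[symmetric]
    using \<open>0 \<le> c\<close> by (intro mult_left_mono inverse_square_convolution_le) auto
  moreover have "eps (Suc k) / L = c * (10 / (real k + 2)^2)"
    unfolding eps_def c_def by (simp add: field_simps power2_eq_square)
  ultimately show ?thesis
    by simp
qed

lemma one_plus_inverse_powr_le_3:
  fixes L t :: real
  assumes "0 < L" "0 \<le> t" "t \<le> L"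
  shows "(1 + 1/L) powr t \<le> 3"
proof -
  have "(1 + 1/L) powr t \<le> (1 + 1/L) powr L"
    using assms by (intro powr_mono) auto
  also have "\<dots> = exp (L * ln (1 + 1/L))"
  proof -
    have "0 < 1 + 1/L"
      using assms by (intro add_pos_pos) auto
    then show ?thesis
      by (simp add: powr_def)
  qed
  also have "\<dots> \<le> exp (L * (1/L))"
    using assms ln_add_one_self_le_self[of "1/L"] by (intro exp_mono mult_left_mono) auto
  also have "\<dots> \<le> 3"
    using assms exp_le by simp
  finally show ?thesis .
qed

lemma sum_antidiagonal_Suc_diff:
  fixes c :: real and h g :: "nat \<Rightarrow> real" and e :: "nat \<Rightarrow> nat \<Rightarrow> real"
  shows "(\<Sum>i\<in>{0..Suc k}. c + h i + g (Suc k - i) + e i (Suc k - i))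
       - (\<Sum>i\<in>{0..k}. c + h i + g (k - i) + e i (k - i)) - c
     = h (Suc k) + g (Suc k) + (\<Sum>i\<in>{0..Suc k}. e i (Suc k - i)) - (\<Sum>i\<in>{0..k}. e i (k - i))"
proof -
  have "(\<Sum>i\<in>{0..Suc k}. g (Suc k - i)) = (\<Sum>i\<in>{0..Suc k}. g i)"
    using sum.atLeastAtMost_rev[of g 0 "Suc k"] by simp
  moreover have "(\<Sum>i\<in>{0..k}. g (k - i)) = (\<Sum>i\<in>{0..k}. g i)"
    using sum.atLeastAtMost_rev[of g 0 k] by simp
  ultimately show ?thesis
    by (simp add: sum.distrib algebra_simps)
qed

context
  fixes w :: nat and B :: "nat \<Rightarrow> nat \<Rightarrow> bool \<Rightarrow> nat" and Mbase :: "nat \<Rightarrow> nat \<Rightarrow> mat"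
begin

abbreviation approx_err :: "nat \<Rightarrow> nat \<Rightarrow> nat \<Rightarrow> (nat \<Rightarrow> real) \<Rightarrow> nat \<Rightarrow> real" where
  "approx_err k l r z \<equiv> mat_vec w (\<lambda>u v. Mrec w B Mbase k l r u v - range_mat w B l r u v) z"

abbreviation walk :: "nat \<Rightarrow> nat \<Rightarrow> (nat \<Rightarrow> real) \<Rightarrow> nat \<Rightarrow> real" where
  "walk l r z \<equiv> mat_vec w (range_mat w B l r) z"

lemma approx_err_single_layer: "u < w \<Longrightarrow> approx_err k l (Suc l) y u = 0"
  by (subst Mrec.simps) (simp add: mat_vec_diff mat_vec_range_mat_Suc)

lemma approx_err_Suc_eq:
  assumes "2 \<le> r - l" and m: "m = (l + r) div 2"
  shows "approx_err (Suc k) l r y u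
    = approx_err (Suc k) l m (walk m r y) u + walk l m (approx_err (Suc k) m r y) u
      + (\<Sum>i\<in>{0..Suc k}. approx_err i l m (approx_err (Suc k - i) m r y) u)
      - (\<Sum>i\<in>{0..k}. approx_err i l m (approx_err (k - i) m r y) u)"
proof -
  have "l \<le> m" "m \<le> r"
    using assms by auto
  have product: "mat_vec w (Mrec w B Mbase i l m) (mat_vec w (Mrec w B Mbase j m r) y) u
      = walk l m (walk m r y) u + approx_err i l m (walk m r y) u
        + walk l m (approx_err j m r y) u + approx_err i l m (approx_err j m r y) u" for i j
  proof -
    have split: "mat_vec w (Mrec w B Mbase j m r) y = (\<lambda>v. walk m r y v + approx_err j m r y v)"
      by (simp add: mat_vec_diff)
    have left: "mat_vec w (Mrec w B Mbase i l m) z u = walk l m z u + approx_err i l m z u" for z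
      by (simp add: mat_vec_diff)
    show ?thesis
      unfolding split mat_vec_add left by simp
  qed
  have recursion: "Mrec w B Mbase (Suc k) l r = (\<lambda>u v.
      (\<Sum>i\<in>{0..Suc k}. mat_mult w (Mrec w B Mbase i l m) (Mrec w B Mbase (Suc k - i) m r) u v)
    - (\<Sum>i\<in>{0..k}. mat_mult w (Mrec w B Mbase i l m) (Mrec w B Mbase (k - i) m r) u v))"
    using assms by (subst Mrec.simps) simp
  have "approx_err (Suc k) l r y u
      = (\<Sum>i\<in>{0..Suc k}. mat_vec w (Mrec w B Mbase i l m) (mat_vec w (Mrec w B Mbase (Suc k - i) m r) y) u)
      - (\<Sum>i\<in>{0..k}. mat_vec w (Mrec w B Mbase i l m) (mat_vec w (Mrec w B Mbase (k - i) m r) y) u)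
      - walk l m (walk m r y) u"
    unfolding mat_vec_diff recursion mat_vec_sum mat_vec_mat_mult
      mat_vec_range_mat_split[OF \<open>l \<le> m\<close> \<open>m \<le> r\<close>] ..
  \<comment> \<open>Writing \<open>Mrec i = M + E i\<close> on both halves, the \<open>M M\<close> products of the two
    convolutions cancel except one, and that one cancels the exact walk over \<open>[l, r]\<close>.\<close>
  then show ?thesis
    unfolding product by (rule trans[OF _ sum_antidiagonal_Suc_diff])
qed

context
  fixes n :: nat and \<gamma> :: real and eps :: "nat \<Rightarrow> real"
  assumes w_pos: "0 < w" and reg: "regular_robp n w B" and n_ge2: "2 \<le> n"
    and gamma: "0 < \<gamma>" "\<gamma> < 1 / 2"
    and eps_def: "\<And>i. eps i = \<gamma> ^ (i + 1) / (10 * real ((i + 1) ^ 2) * log 2 (real n))"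
    and base_approx: "\<And>l r y. l < r \<Longrightarrow> r \<le> n \<Longrightarrow>
        inf_norm w (mat_vec w (\<lambda>u v. Mbase l r u v - range_mat w B l r u v) y)
          \<le> (eps 0 / (3 * real (w ^ 2))) * weight w B l r y"
begin

lemma log_n_ge_1: "1 \<le> log 2 (real n)"
  using le_log2_of_power[of 1 n] n_ge2 by simp

lemma eps_nonneg: "0 \<le> eps k"
  unfolding eps_def using gamma log_n_ge_1 by simp

lemma dyadic_factor_le_1:
  assumes "2 ^ Suc t \<le> n"
  shows "(1 + 1 / log 2 (real n)) powr real t / 3 \<le> 1"
proof -
  have "real (Suc t) \<le> log 2 (real n)"
    using le_log2_of_power[OF assms] .
  then show ?thesis
    using one_plus_inverse_powr_le_3[of "log 2 (real n)" "real t"] log_n_ge_1 by simp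
qed

lemma approx_err_0_le:
  assumes "2 \<le> r - l" "r \<le> n"
  shows "inf_norm w (approx_err 0 l r y) \<le> (1 / 3) * eps 0 * (weight w B l r y / real (w ^ 2))"
proof -
  have "Mrec w B Mbase 0 l r = Mbase l r"
    using assms(1) by (subst Mrec.simps) simp
  then show ?thesis
    using base_approx[of l r y] assms by simp
qed

context
  fixes l m r :: nat and C :: real
  assumes mid: "m = (l + r) div 2" and long: "2 \<le> r - l" and r_le: "r \<le> n"
    and C: "1 / 3 \<le> C" "C \<le> 1"
    and left: "\<And>j z. inf_norm w (approx_err j l m z) \<le> C * eps j * (weight w B l m z / real (w ^ 2))"
    and right: "\<And>j z. inf_norm w (approx_err j m r z) \<le> C * eps j * (weight w B m r z / real (w ^ 2))"
begin

lemma mid_between: "l \<le> m" "m \<le> r"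
  using mid long by auto

lemma abs_approx_err_product_le:
  assumes "u < w"
  shows "\<bar>approx_err i l m (approx_err j m r y) u\<bar>
    \<le> C * C * (eps i * eps j) * (weight w B m r y / real (w ^ 2))"
proof -
  have "\<bar>approx_err i l m (approx_err j m r y) u\<bar> \<le> inf_norm w (approx_err i l m (approx_err j m r y))"
    using w_pos assms by (rule abs_le_inf_norm)
  also have "\<dots> \<le> C * eps i * (weight w B l m (approx_err j m r y) / real (w ^ 2))"
    by (rule left)
  also have "\<dots> \<le> C * eps i * inf_norm w (approx_err j m r y)"
    using weight_le_inf_norm[OF reg w_pos, of l m "approx_err j m r y"] mid_between r_le C eps_nonneg[of i] w_pos
    by (intro mult_left_mono) (auto simp: divide_le_eq mult.commute)
  also have "\<dots> \<le> C * eps i * (C * eps j * (weight w B m r y / real (w ^ 2)))"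
    using right C eps_nonneg[of i] by (intro mult_left_mono) auto
  finally show ?thesis
    by (simp add: algebra_simps)
qed

lemma abs_approx_err_convolution_le:
  assumes "u < w"
  shows "\<bar>\<Sum>i\<in>{0..K}. approx_err i l m (approx_err (K - i) m r y) u\<bar>
    \<le> C * C * (\<Sum>i\<in>{0..K}. eps i * eps (K - i)) * (weight w B m r y / real (w ^ 2))"
proof -
  have "\<bar>\<Sum>i\<in>{0..K}. approx_err i l m (approx_err (K - i) m r y) u\<bar>
      \<le> (\<Sum>i\<in>{0..K}. \<bar>approx_err i l m (approx_err (K - i) m r y) u\<bar>)"
    by (rule sum_abs)
  also have "\<dots> \<le> (\<Sum>i\<in>{0..K}. C * C * (eps i * eps (K - i)) * (weight w B m r y / real (w ^ 2)))"
    using abs_approx_err_product_le[OF assms] by (intro sum_mono)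
  also have "\<dots> = C * C * (\<Sum>i\<in>{0..K}. eps i * eps (K - i)) * (weight w B m r y / real (w ^ 2))"
    by (simp only: sum_distrib_left sum_distrib_right)
  finally show ?thesis .
qed

lemma abs_approx_err_Suc_le:
  assumes "u < w"
  shows "\<bar>approx_err (Suc k) l r y u\<bar>
    \<le> C * (1 + 1 / log 2 (real n)) * eps (Suc k) * (weight w B l r y / real (w ^ 2))"
proof -
  define L where "L = log 2 (real n)"
  define e where "e = eps (Suc k)"
  define P where "P = weight w B l m (walk m r y) / real (w ^ 2)"
  define Q where "Q = weight w B m r y / real (w ^ 2)"
  define S where "S K = (\<Sum>i\<in>{0..K}. approx_err i l m (approx_err (K - i) m r y) u)" for K
  define Z where "Z K = (\<Sum>i\<in>{0..K}. eps i * eps (K - i))" for K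
  have "0 \<le> P" "0 \<le> Q" "0 \<le> Z (Suc k) + Z k"
    unfolding P_def Q_def Z_def using weight_nonneg[OF reg] eps_nonneg
    by (simp_all add: sum_nonneg)
  have "0 \<le> C" "1 \<le> L"
    using C log_n_ge_1 unfolding L_def by simp_all
  \<comment> \<open>This is where \<open>C \<le> 1\<close> is needed: the cross terms carry \<open>C\<^sup>2\<close> but may only cost \<open>C\<close>.\<close>
  have "C * (Z (Suc k) + Z k) \<le> e / L"
    using eps_convolution_le[OF gamma _ eps_def, of k] \<open>1 \<le> L\<close>
      mult_left_le_one_le[OF \<open>0 \<le> Z (Suc k) + Z k\<close> \<open>0 \<le> C\<close> \<open>C \<le> 1\<close>]
    unfolding Z_def e_def L_def by simp
  then have "C * (C * (Z (Suc k) + Z k)) * Q \<le> C * (e / L) * Q"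
    using \<open>0 \<le> C\<close> \<open>0 \<le> Q\<close> by (intro mult_right_mono mult_left_mono)
  then have "C * C * Z (Suc k) * Q + C * C * Z k * Q \<le> C * (e / L) * Q"
    by (simp add: algebra_simps)
  moreover have "\<bar>approx_err (Suc k) l m (walk m r y) u\<bar> \<le> C * e * P"
    using abs_le_inf_norm[OF w_pos assms] left unfolding P_def e_def by (rule order_trans)
  moreover have "\<bar>walk l m (approx_err (Suc k) m r y) u\<bar> \<le> C * e * Q"
    using abs_mat_vec_range_mat_le[OF reg mid_between(1) order_trans[OF mid_between(2) r_le]
        abs_le_inf_norm[OF w_pos] assms]
      right[of "Suc k" y] unfolding Q_def e_def by (rule order_trans)
  moreover have "\<bar>S K\<bar> \<le> C * C * Z K * Q" for K
    unfolding S_def Z_def Q_def by (rule abs_approx_err_convolution_le[OF assms])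
  moreover have "approx_err (Suc k) l r y u
      = approx_err (Suc k) l m (walk m r y) u + walk l m (approx_err (Suc k) m r y) u + S (Suc k) - S k"
    unfolding S_def using long mid by (rule approx_err_Suc_eq)
  ultimately have "\<bar>approx_err (Suc k) l r y u\<bar> \<le> C * e * P + C * e * Q + C * (e / L) * Q"
    by (smt (verit))
  also have "\<dots> \<le> C * (1 + 1 / L) * e * (P + Q)"
    using \<open>0 \<le> C\<close> \<open>0 \<le> P\<close> \<open>1 \<le> L\<close> eps_nonneg[of "Suc k"] unfolding e_def
    by (simp add: algebra_simps add_divide_distrib)
  also have "P + Q = weight w B l r y / real (w ^ 2)"
    unfolding P_def Q_def weight_split[OF reg mid_between] by (simp add: add_divide_distrib)
  finally show ?thesis
    unfolding L_def e_def .
qed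

lemma approx_err_le_of_halves:
  "inf_norm w (approx_err k l r y)
    \<le> C * (1 + 1 / log 2 (real n)) * eps k * (weight w B l r y / real (w ^ 2))"
proof (cases k)
  case 0
  have "1 / 3 \<le> C * (1 + 1 / log 2 (real n))"
    using C log_n_ge_1 by (simp add: algebra_simps add_increasing2)
  then have "(1 / 3) * eps 0 * (weight w B l r y / real (w ^ 2))
      \<le> C * (1 + 1 / log 2 (real n)) * eps 0 * (weight w B l r y / real (w ^ 2))"
    using eps_nonneg[of 0] weight_nonneg[OF reg, of l r y] by (intro mult_right_mono) auto
  with approx_err_0_le[OF long r_le, of y] show ?thesis
    unfolding 0 by linarith
next
  case (Suc k')
  show ?thesis
    unfolding Suc using w_pos abs_approx_err_Suc_le by (rule inf_norm_leI)
qed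

end

lemma approx_err_dyadic_le:
  assumes "(i + 1) * 2 ^ t \<le> n"
  shows "inf_norm w (approx_err k (i * 2 ^ t) (i * 2 ^ t + 2 ^ t) y)
    \<le> ((1 + 1 / log 2 (real n)) powr real t / 3) * eps k
      * (weight w B (i * 2 ^ t) (i * 2 ^ t + 2 ^ t) y / real (w ^ 2))"
  using assms
proof (induction t arbitrary: i k y)
  case 0
  have "inf_norm w (approx_err k i (Suc i) y) \<le> 0"
    using w_pos approx_err_single_layer by (intro inf_norm_leI) auto
  moreover have "0 \<le> eps k * (weight w B i (Suc i) y / real (w ^ 2))"
    using eps_nonneg weight_nonneg[OF reg] by simp
  ultimately show ?case
    by simp
next
  case (Suc t)
  define l where "l = i * 2 ^ Suc t"
  define m where "m = l + 2 ^ t"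
  define r where "r = l + 2 ^ Suc t"
  define C where "C = (1 + 1 / log 2 (real n)) powr real t / 3"
  have "m = (l + r) div 2" "2 \<le> r - l" "r \<le> n"
    using Suc.prems by (auto simp: l_def m_def r_def algebra_simps)
  have "1 \<le> (1 + 1 / log 2 (real n)) powr real t"
    using log_n_ge_1 by (intro ge_one_powr_ge_zero) auto
  then have "1 / 3 \<le> C" "C \<le> 1"
    using dyadic_factor_le_1[of t] Suc.prems unfolding C_def by (auto simp: algebra_simps)
  moreover have "inf_norm w (approx_err j l m z) \<le> C * eps j * (weight w B l m z / real (w ^ 2))" for j z
    using Suc.IH[of "2 * i" j z] Suc.prems by (simp add: C_def l_def m_def algebra_simps)
  moreover have "inf_norm w (approx_err j m r z) \<le> C * eps j * (weight w B m r z / real (w ^ 2))" for j z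
    using Suc.IH[of "2 * i + 1" j z] Suc.prems by (simp add: C_def l_def m_def r_def algebra_simps)
  ultimately have "inf_norm w (approx_err k l r y)
      \<le> C * (1 + 1 / log 2 (real n)) * eps k * (weight w B l r y / real (w ^ 2))"
    using \<open>m = (l + r) div 2\<close> \<open>2 \<le> r - l\<close> \<open>r \<le> n\<close> by (intro approx_err_le_of_halves)
  moreover have "C * (1 + 1 / log 2 (real n)) = (1 + 1 / log 2 (real n)) powr real (Suc t) / 3"
    unfolding C_def using log_n_ge_1 by (simp add: powr_add)
  ultimately show ?case
    by (simp add: l_def r_def)
qed

end

end

theorem lemma3p7:
  fixes n w d0 :: nat
    and B :: "nat \<Rightarrow> nat \<Rightarrow> bool \<Rightarrow> nat"
    and G0 :: "bool list \<Rightarrow> bool list"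
    and \<gamma> :: real
    and eps :: "nat \<Rightarrow> real"
  assumes w_pos: "0 < w"
    and reg: "regular_robp n w B"
    and n_pow2: "\<exists>p. n = 2 ^ p"
    and n_ge2: "n \<ge> 2"
    and gamma: "0 < \<gamma>" "\<gamma> < 1 / 2"
    and eps_def: "\<And>i. eps i = \<gamma> ^ (i + 1) / (10 * real ((i + 1) ^ 2) * log 2 (real n))"
    and G0_len: "\<And>s. length s = d0 \<Longrightarrow> length (G0 s) = n"
    and G0_good: "\<And>l r y. l < r \<Longrightarrow> r \<le> n \<Longrightarrow>
        inf_norm w (mat_vec w (\<lambda>u v. seed_avg w B d0 G0 l r u v - range_mat w B l r u v) y)
          \<le> (eps 0 / (3 * real (w ^ 2))) * weight w B l r y"
  shows "\<forall>k l r. in_BS n l r \<longrightarrow> (\<forall>y.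
        inf_norm w (mat_vec w (\<lambda>u v. Mrec w B (seed_avg w B d0 G0) k l r u v - range_mat w B l r u v) y)
          \<le> ((1 + 1 / log 2 (real n)) powr log 2 (real (r - l)) / 3) * eps k
             * (weight w B l r y / real (w ^ 2)))"
proof (intro allI impI)
  fix k l r y
  assume "in_BS n l r"
  then obtain i t where l: "l = i * 2 ^ t" and r: "r = l + 2 ^ t" "r \<le> n"
    unfolding in_BS_def by blast
  have "log 2 (real (r - l)) = real t"
    using r(1) log2_of_power_eq[of "2 ^ t" t] by simp
  moreover have "(i + 1) * 2 ^ t \<le> n"
    using r l by (simp add: algebra_simps)
  ultimately show "inf_norm w (mat_vec w (\<lambda>u v. Mrec w B (seed_avg w B d0 G0) k l r u v - range_mat w B l r u v) y)
      \<le> ((1 + 1 / log 2 (real n)) powr log 2 (real (r - l)) / 3) * eps k * (weight w B l r y / real (w ^ 2))"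
    using approx_err_dyadic_le[OF w_pos reg n_ge2 gamma eps_def G0_good] unfolding l r(1) by simp
qed

end
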